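(* Let $(H,\mu_H,\Delta_H,\alpha_H)$ be a Hom-bialgebra and $(A,\mu_A,\alpha_A)$ a left $H$-module Hom-algebra with action $h\otimes a\mapsto h\cdot a$, with $\alpha_H,\alpha_A$ bijective. Assume moreover that $(A,\alpha_A)$ is a left $H$-comodule with structure $a\mapsto a_{(-1)}\otimes a_{(0)}$ such that $(A,\mu_A,\alpha_A)$ is a left $H$-comodule Hom-algebra and $(A,\alpha_A)$ is a left-left Yetter-Drinfeld module over $H$. Then the Hom-smash product $A\# H$ is an $H$-bicomodule Hom-algebra via $\rho_{A\# H}(a\# h)=(\alpha_A(a)\# h_1)\otimes h_2$ and $\lambda_{A\# H}:A\# H\to H\otimes(A\# H)$, $\lambda_{A\# H}(a\# h)=a_{(-1)}h_1\otimes(a_{(0)}\# h_2)$.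
   Context: Over a field $k$, no (co)units assumed; $\Delta(h)=h_1\otimes h_2$. Hom-associative algebra $(A,\mu,\alpha)$: $\alpha(aa')=\alpha(a)\alpha(a')$, $\alpha(a)(a'a'')=(aa')\alpha(a'')$; morphisms commute with structure maps and multiplications; tensor products of Hom-associative algebras are componentwise. Hom-bialgebra $(H,\mu,\Delta,\alpha)$: $(H,\mu,\alpha)$ Hom-associative, $\Delta(h_1)\otimes\alpha(h_2)=\alpha(h_1)\otimes\Delta(h_2)$, $\Delta(hh')=h_1h'_1\otimes h_2h'_2$, $\Delta(\alpha(h))=\alpha(h_1)\otimes\alpha(h_2)$. Left $H$-module Hom-algebra: Hom-associative $(A,\mu_A,\alpha_A)$ with action satisfying $\alpha_A(h\cdot a)=\alpha_H(h)\cdot\alpha_A(a)$, $\alpha_H(h)\cdot(h'\cdot a)=(hh')\cdot\alpha_A(a)$, $\alpha_H^2(h)\cdot(aa')=(h_1\cdot a)(h_2\cdot a')$. Hom-smash product $A\# H$: $A\otimes H$, structure map $\alpha_A\otimes\alpha_H$, product $(a\# h)(a'\# h')=a(\alpha_H^{-2}(h_1)\cdot\alpha_A^{-1}(a'))\#\alpha_H^{-1}(h_2)h'$. A left $H$-comodule structure on $(M,\alpha_M)$ is $\lambda:M\to H\otimes M$ with $(\alpha_H\otimes\alpha_M)\circ\lambda=\lambda\circ\alpha_M$ and $(\Delta_H\otimes\alpha_M)\circ\lambda=(\alpha_H\otimes\lambda)\circ\lambda$; a right one is $\rho:M\to M\otimes H$ with $(\alpha_M\otimes\alpha_H)\circ\rho=\rho\circ\alpha_M$,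 $(\alpha_M\otimes\Delta_H)\circ\rho=(\rho\otimes\alpha_H)\circ\rho$; $M$ is an $H$-bicomodule if it has both and $(\lambda\otimes\alpha_H)\circ\rho=(\alpha_H\otimes\rho)\circ\lambda$. A left (right) $H$-comodule Hom-algebra is a Hom-associative algebra with a left (right) comodule structure that is a morphism of Hom-associative algebras into $H\otimes D$ ($D\otimes H$); an $H$-bicomodule Hom-algebra is both a left and right $H$-comodule Hom-algebra whose structures form an $H$-bicomodule. A left-left Yetter-Drinfeld module over $H$ is $(M,\alpha_M)$ that is a left $H$-module (action with $\alpha_M(h\cdot m)=\alpha_H(h)\cdot\alpha_M(m)$, $\alpha_H(h)\cdot(h'\cdot m)=(hh')\cdot\alpha_M(m)$) and a left $H$-comodule $m\mapsto m_{(-1)}\otimes m_{(0)}$ such that $(h_1\cdot m)_{(-1)}\alpha_H^2(h_2)\otimes(h_1\cdot m)_{(0)}=\alpha_H^2(h_1)\alpha_H(m_{(-1)})\otimes\alpha_H(h_2)\cdot m_{(0)}$. *)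

theory Defs
  imports "HOL-Library.Poly_Mapping"
begin

(* Vector spaces over a field 'k are modelled by their bases: a k-vector space
with basis indexed by the type 'i is the space of finitely supported functions
'i \<Rightarrow>\<^sub>0 'k.  The tensor product of the spaces with bases 'a and 'b is the
space with basis 'a \<times> 'b. *)

type_synonym ('i, 'k) vs = "'i \<Rightarrow>\<^sub>0 'k"

definition smul :: "'k::field \<Rightarrow> ('i \<Rightarrow>\<^sub>0 'k) \<Rightarrow> ('i \<Rightarrow>\<^sub>0 'k)" where
  "smul c x = Poly_Mapping.map (\<lambda>t. c * t) x"

definition linmap :: "(('a \<Rightarrow>\<^sub>0 'k::field) \<Rightarrow> ('b \<Rightarrow>\<^sub>0 'k)) \<Rightarrow> bool" where
  "linmap f \<longleftrightarrow> (\<forall>x y. f (x + y) = f x + f y) \<and> (\<forall>c x. f (smul c x) = smul c (f x))"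

definition linext :: "('a \<Rightarrow> ('b \<Rightarrow>\<^sub>0 'k::field)) \<Rightarrow> ('a \<Rightarrow>\<^sub>0 'k) \<Rightarrow> ('b \<Rightarrow>\<^sub>0 'k)" where
  "linext g x = (\<Sum>i\<in>Poly_Mapping.keys x. smul (Poly_Mapping.lookup x i) (g i))"

definition bvec :: "'a \<Rightarrow> ('a \<Rightarrow>\<^sub>0 'k::field)" where
  "bvec a = Poly_Mapping.single a 1"

definition tensor :: "('a \<Rightarrow>\<^sub>0 'k::field) \<Rightarrow> ('b \<Rightarrow>\<^sub>0 'k) \<Rightarrow> ('a \<times> 'b \<Rightarrow>\<^sub>0 'k)" where
  "tensor x y = Abs_poly_mapping (\<lambda>(a, b). Poly_Mapping.lookup x a * Poly_Mapping.lookup y b)"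

definition tmap :: "(('a \<Rightarrow>\<^sub>0 'k::field) \<Rightarrow> ('c \<Rightarrow>\<^sub>0 'k)) \<Rightarrow> (('b \<Rightarrow>\<^sub>0 'k) \<Rightarrow> ('d \<Rightarrow>\<^sub>0 'k))
    \<Rightarrow> ('a \<times> 'b \<Rightarrow>\<^sub>0 'k) \<Rightarrow> ('c \<times> 'd \<Rightarrow>\<^sub>0 'k)" where
  "tmap f g = linext (\<lambda>(a, b). tensor (f (bvec a)) (g (bvec b)))"

definition reidx :: "('a \<Rightarrow> 'b) \<Rightarrow> ('a \<Rightarrow>\<^sub>0 'k::field) \<Rightarrow> ('b \<Rightarrow>\<^sub>0 'k)" where
  "reidx f = linext (\<lambda>a. bvec (f a))"

definition tassoc :: "(('a \<times> 'b) \<times> 'c \<Rightarrow>\<^sub>0 'k::field) \<Rightarrow> ('a \<times> ('b \<times> 'c) \<Rightarrow>\<^sub>0 'k)" where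
  "tassoc = reidx (\<lambda>((a, b), c). (a, (b, c)))"

definition tassoc' :: "('a \<times> ('b \<times> 'c) \<Rightarrow>\<^sub>0 'k::field) \<Rightarrow> (('a \<times> 'b) \<times> 'c \<Rightarrow>\<^sub>0 'k)" where
  "tassoc' = reidx (\<lambda>(a, (b, c)). ((a, b), c))"

definition tmid :: "(('a \<times> 'b) \<times> ('c \<times> 'd) \<Rightarrow>\<^sub>0 'k::field) \<Rightarrow> (('a \<times> 'c) \<times> ('b \<times> 'd) \<Rightarrow>\<^sub>0 'k)" where
  "tmid = reidx (\<lambda>((a, b), (c, d)). ((a, c), (b, d)))"

definition tensor_mul :: "(('a \<times> 'a \<Rightarrow>\<^sub>0 'k::field) \<Rightarrow> ('a \<Rightarrow>\<^sub>0 'k)) \<Rightarrow> (('b \<times> 'b \<Rightarrow>\<^sub>0 'k) \<Rightarrow> ('b \<Rightarrow>\<^sub>0 'k))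
    \<Rightarrow> (('a \<times> 'b) \<times> ('a \<times> 'b) \<Rightarrow>\<^sub>0 'k) \<Rightarrow> ('a \<times> 'b \<Rightarrow>\<^sub>0 'k)" where
  "tensor_mul m1 m2 z = tmap m1 m2 (tmid z)"

definition hom_assoc :: "(('a \<times> 'a \<Rightarrow>\<^sub>0 'k::field) \<Rightarrow> ('a \<Rightarrow>\<^sub>0 'k)) \<Rightarrow> (('a \<Rightarrow>\<^sub>0 'k) \<Rightarrow> ('a \<Rightarrow>\<^sub>0 'k)) \<Rightarrow> bool" where
  "hom_assoc mu al \<longleftrightarrow> linmap mu \<and> linmap al \<and>
     (\<forall>a a'. al (mu (tensor a a')) = mu (tensor (al a) (al a'))) \<and>
     (\<forall>a a' a''. mu (tensor (al a) (mu (tensor a' a''))) = mu (tensor (mu (tensor a a')) (al a'')))"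

definition hom_alg_morphism :: "(('a \<times> 'a \<Rightarrow>\<^sub>0 'k::field) \<Rightarrow> ('a \<Rightarrow>\<^sub>0 'k)) \<Rightarrow> (('a \<Rightarrow>\<^sub>0 'k) \<Rightarrow> ('a \<Rightarrow>\<^sub>0 'k))
    \<Rightarrow> (('b \<times> 'b \<Rightarrow>\<^sub>0 'k) \<Rightarrow> ('b \<Rightarrow>\<^sub>0 'k)) \<Rightarrow> (('b \<Rightarrow>\<^sub>0 'k) \<Rightarrow> ('b \<Rightarrow>\<^sub>0 'k))
    \<Rightarrow> (('a \<Rightarrow>\<^sub>0 'k) \<Rightarrow> ('b \<Rightarrow>\<^sub>0 'k)) \<Rightarrow> bool" where
  "hom_alg_morphism mu al mu' al' f \<longleftrightarrow> linmap f \<and>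
     (\<forall>a. f (al a) = al' (f a)) \<and>
     (\<forall>a a'. f (mu (tensor a a')) = mu' (tensor (f a) (f a')))"

definition hom_bialgebra :: "(('i \<times> 'i \<Rightarrow>\<^sub>0 'k::field) \<Rightarrow> ('i \<Rightarrow>\<^sub>0 'k)) \<Rightarrow> (('i \<Rightarrow>\<^sub>0 'k) \<Rightarrow> ('i \<times> 'i \<Rightarrow>\<^sub>0 'k))
    \<Rightarrow> (('i \<Rightarrow>\<^sub>0 'k) \<Rightarrow> ('i \<Rightarrow>\<^sub>0 'k)) \<Rightarrow> bool" where
  "hom_bialgebra mu de al \<longleftrightarrow> hom_assoc mu al \<and> linmap de \<and>
     (\<forall>h. tassoc (tmap de al (de h)) = tmap al de (de h)) \<and>
     (\<forall>h h'. de (mu (tensor h h')) = tensor_mul mu mu (tensor (de h) (de h'))) \<and>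
     (\<forall>h. de (al h) = tmap al al (de h))"

definition left_module :: "(('i \<times> 'i \<Rightarrow>\<^sub>0 'k::field) \<Rightarrow> ('i \<Rightarrow>\<^sub>0 'k)) \<Rightarrow> (('i \<Rightarrow>\<^sub>0 'k) \<Rightarrow> ('i \<Rightarrow>\<^sub>0 'k))
    \<Rightarrow> (('j \<Rightarrow>\<^sub>0 'k) \<Rightarrow> ('j \<Rightarrow>\<^sub>0 'k)) \<Rightarrow> (('i \<times> 'j \<Rightarrow>\<^sub>0 'k) \<Rightarrow> ('j \<Rightarrow>\<^sub>0 'k)) \<Rightarrow> bool" where
  "left_module muH alH alM act \<longleftrightarrow> linmap alM \<and> linmap act \<and>
     (\<forall>h m. alM (act (tensor h m)) = act (tensor (alH h) (alM m))) \<and>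
     (\<forall>h h' m. act (tensor (alH h) (act (tensor h' m))) = act (tensor (muH (tensor h h')) (alM m)))"

definition module_hom_algebra :: "(('i \<times> 'i \<Rightarrow>\<^sub>0 'k::field) \<Rightarrow> ('i \<Rightarrow>\<^sub>0 'k)) \<Rightarrow> (('i \<Rightarrow>\<^sub>0 'k) \<Rightarrow> ('i \<times> 'i \<Rightarrow>\<^sub>0 'k))
    \<Rightarrow> (('i \<Rightarrow>\<^sub>0 'k) \<Rightarrow> ('i \<Rightarrow>\<^sub>0 'k))
    \<Rightarrow> (('j \<times> 'j \<Rightarrow>\<^sub>0 'k) \<Rightarrow> ('j \<Rightarrow>\<^sub>0 'k)) \<Rightarrow> (('j \<Rightarrow>\<^sub>0 'k) \<Rightarrow> ('j \<Rightarrow>\<^sub>0 'k))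
    \<Rightarrow> (('i \<times> 'j \<Rightarrow>\<^sub>0 'k) \<Rightarrow> ('j \<Rightarrow>\<^sub>0 'k)) \<Rightarrow> bool" where
  "module_hom_algebra muH deH alH muA alA act \<longleftrightarrow> hom_assoc muA alA \<and>
     left_module muH alH alA act \<and>
     (\<forall>h a a'. act (tensor (alH (alH h)) (muA (tensor a a'))) =
               muA (tmap act act (tmid (tensor (deH h) (tensor a a')))))"

definition left_comodule :: "(('i \<Rightarrow>\<^sub>0 'k::field) \<Rightarrow> ('i \<times> 'i \<Rightarrow>\<^sub>0 'k)) \<Rightarrow> (('i \<Rightarrow>\<^sub>0 'k) \<Rightarrow> ('i \<Rightarrow>\<^sub>0 'k))
    \<Rightarrow> (('j \<Rightarrow>\<^sub>0 'k) \<Rightarrow> ('j \<Rightarrow>\<^sub>0 'k)) \<Rightarrow> (('j \<Rightarrow>\<^sub>0 'k) \<Rightarrow> ('i \<times> 'j \<Rightarrow>\<^sub>0 'k)) \<Rightarrow> bool" where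
  "left_comodule deH alH alM la \<longleftrightarrow> linmap alM \<and> linmap la \<and>
     (\<forall>m. tmap alH alM (la m) = la (alM m)) \<and>
     (\<forall>m. tassoc (tmap deH alM (la m)) = tmap alH la (la m))"

definition right_comodule :: "(('i \<Rightarrow>\<^sub>0 'k::field) \<Rightarrow> ('i \<times> 'i \<Rightarrow>\<^sub>0 'k)) \<Rightarrow> (('i \<Rightarrow>\<^sub>0 'k) \<Rightarrow> ('i \<Rightarrow>\<^sub>0 'k))
    \<Rightarrow> (('j \<Rightarrow>\<^sub>0 'k) \<Rightarrow> ('j \<Rightarrow>\<^sub>0 'k)) \<Rightarrow> (('j \<Rightarrow>\<^sub>0 'k) \<Rightarrow> ('j \<times> 'i \<Rightarrow>\<^sub>0 'k)) \<Rightarrow> bool" where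
  "right_comodule deH alH alM rh \<longleftrightarrow> linmap alM \<and> linmap rh \<and>
     (\<forall>m. tmap alM alH (rh m) = rh (alM m)) \<and>
     (\<forall>m. tmap alM deH (rh m) = tassoc (tmap rh alH (rh m)))"

definition bicomodule :: "(('i \<Rightarrow>\<^sub>0 'k::field) \<Rightarrow> ('i \<times> 'i \<Rightarrow>\<^sub>0 'k)) \<Rightarrow> (('i \<Rightarrow>\<^sub>0 'k) \<Rightarrow> ('i \<Rightarrow>\<^sub>0 'k))
    \<Rightarrow> (('j \<Rightarrow>\<^sub>0 'k) \<Rightarrow> ('j \<Rightarrow>\<^sub>0 'k)) \<Rightarrow> (('j \<Rightarrow>\<^sub>0 'k) \<Rightarrow> ('i \<times> 'j \<Rightarrow>\<^sub>0 'k))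
    \<Rightarrow> (('j \<Rightarrow>\<^sub>0 'k) \<Rightarrow> ('j \<times> 'i \<Rightarrow>\<^sub>0 'k)) \<Rightarrow> bool" where
  "bicomodule deH alH alM la rh \<longleftrightarrow> left_comodule deH alH alM la \<and> right_comodule deH alH alM rh \<and>
     (\<forall>m. tassoc (tmap la alH (rh m)) = tmap alH rh (la m))"

definition left_comodule_hom_algebra where
  "left_comodule_hom_algebra muH deH alH muD alD la \<longleftrightarrow> hom_assoc muD alD \<and>
     left_comodule deH alH alD la \<and>
     hom_alg_morphism muD alD (tensor_mul muH muD) (tmap alH alD) la"

definition right_comodule_hom_algebra where
  "right_comodule_hom_algebra muH deH alH muD alD rh \<longleftrightarrow> hom_assoc muD alD \<and>
     right_comodule deH alH alD rh \<and>
     hom_alg_morphism muD alD (tensor_mul muD muH) (tmap alD alH) rh"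

definition bicomodule_hom_algebra where
  "bicomodule_hom_algebra muH deH alH muD alD la rh \<longleftrightarrow>
     left_comodule_hom_algebra muH deH alH muD alD la \<and>
     right_comodule_hom_algebra muH deH alH muD alD rh \<and>
     bicomodule deH alH alD la rh"

(* Left-left Yetter-Drinfeld module:
(h_1\<cdot>m)_{(-1)} \<alpha>_H^2(h_2) \<otimes> (h_1\<cdot>m)_{(0)} = \<alpha>_H^2(h_1)\<alpha>_H(m_{(-1)}) \<otimes> \<alpha>_H(h_2)\<cdot>m_{(0)}. *)
definition yd_module where
  "yd_module muH deH alH alM act la \<longleftrightarrow> left_module muH alH alM act \<and>
     left_comodule deH alH alM la \<and>
     (\<forall>h m.
        tmap muH id
          (reidx (\<lambda>((x, z), y). ((x, y), z))
            (tmap la id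
              (tmap act (alH \<circ> alH)
                (reidx (\<lambda>((a, b), c). ((a, c), b)) (tensor (deH h) m)))))
      = tmap (\<lambda>u. muH (tmap (alH \<circ> alH) alH u)) (\<lambda>v. act (tmap alH id v))
          (tmid (tensor (deH h) (la m))))"

(* Hom-smash product A # H = A \<otimes> H:
(a # h)(a' # h') = a(\<alpha>_H^{-2}(h_1)\<cdot>\<alpha>_A^{-1}(a')) # \<alpha>_H^{-1}(h_2)h',
extended linearly from basis vectors. *)
definition smash_term where
  "smash_term muH deH alH muA alA act a h a' h' =
     tmap (\<lambda>u. muA (tensor a (act (tensor (inv alH (inv alH u)) (inv alA a')))))
          (\<lambda>v. muH (tensor (inv alH v) h'))
          (deH h)"

definition smash_mul where
  "smash_mul muH deH alH muA alA act =
     linext (\<lambda>((a, h), (a', h')). smash_term muH deH alH muA alA act (bvec a) (bvec h) (bvec a') (bvec h'))"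

definition smash_rho where
  "smash_rho deH alA z = tassoc' (tmap alA deH z)"

definition smash_lambda where
  "smash_lambda muH deH la z = tmap muH id (tmid (tmap la deH z))"

end

theory Submission
  imports Defs
begin

text \<open>
All structure maps are linear, so every axiom of a bicomodule Hom-algebra for \<open>A # H\<close> only
has to be checked on pure tensors \<open>a # h\<close>. Writing all coproducts and coactions as Sweedler
sums, each side becomes an iterated Sweedler sum; the sums may be reordered freely (Fubini)
and rewritten with the axioms of the data. The identities for \<open>\<rho>\<close> reduce to coassociativity
of \<open>\<Delta>\<close>, the coassociativity of \<open>\<lambda>\<close> to the comodule axiom of \<open>A\<close>, and the multiplicativity
of \<open>\<lambda>\<close>, the one step that really mixes action and coaction, to the Yetter-Drinfeld condition.
\<close>

lemma lookup_smul [simp]: "Poly_Mapping.lookup (smul c x) i = c * Poly_Mapping.lookup x i"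
  unfolding smul_def by (simp add: map.rep_eq when_def)

lemma smul_add: "smul c (x + y) = smul c x + smul c y"
  by (rule poly_mapping_eqI) (simp add: lookup_add distrib_left)

lemma add_smul: "smul (c + d) x = smul c x + smul d x"
  by (rule poly_mapping_eqI) (simp add: lookup_add distrib_right)

lemma smul_smul: "smul c (smul d x) = smul (c * d) x"
  by (rule poly_mapping_eqI) simp

lemma smul_one [simp]: "smul 1 x = x"
  by (rule poly_mapping_eqI) simp

lemma smul_zero [simp]: "smul c 0 = 0" "smul 0 x = 0"
  by (rule poly_mapping_eqI, simp)+

lemma smul_sum: "smul c (sum f S) = (\<Sum>i\<in>S. smul c (f i))"
  by (induction S rule: infinite_finite_induct) (auto simp: smul_add)

lemma linext_sum_superset:
  assumes "finite S" "Poly_Mapping.keys x \<subseteq> S"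
  shows "linext g x = (\<Sum>i\<in>S. smul (Poly_Mapping.lookup x i) (g i))"
  unfolding linext_def
  by (rule sum.mono_neutral_left) (use assms in \<open>auto simp: in_keys_iff\<close>)

lemma linext_add: "linext g (x + y) = linext g x + linext g y"
proof -
  let ?S = "Poly_Mapping.keys x \<union> Poly_Mapping.keys y"
  have S: "finite ?S" "Poly_Mapping.keys (x + y) \<subseteq> ?S"
    by (auto simp: keys_add)
  show ?thesis
    by (simp add: linext_sum_superset[OF S] linext_sum_superset[OF S(1)] lookup_add add_smul
        sum.distrib)
qed

lemma linext_smul: "linext g (smul c x) = smul c (linext g x)"
proof -
  have S: "finite (Poly_Mapping.keys x)" "Poly_Mapping.keys (smul c x) \<subseteq> Poly_Mapping.keys x"
    by (auto simp: in_keys_iff)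
  show ?thesis
    by (simp add: linext_sum_superset[OF S] linext_sum_superset[OF S(1)] smul_sum smul_smul)
qed

lemma linmap_linext [simp]: "linmap (linext g)"
  by (simp add: linmap_def linext_add linext_smul)

lemma linext_bvec [simp]: "linext g (bvec a) = g a"
  by (simp add: linext_def bvec_def)

lemma linmap_add: "linmap f \<Longrightarrow> f (x + y) = f x + f y"
  by (simp add: linmap_def)

lemma linmap_smul: "linmap f \<Longrightarrow> f (smul c x) = smul c (f x)"
  by (simp add: linmap_def)

lemma linmap_zero: "linmap f \<Longrightarrow> f 0 = 0"
  using linmap_smul[of f 0 0] by simp

lemma linmap_sum: "linmap f \<Longrightarrow> f (sum g S) = (\<Sum>i\<in>S. f (g i))"
  by (induction S rule: infinite_finite_induct) (auto simp: linmap_zero linmap_add)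

lemma linmap_ident [simp]: "linmap (\<lambda>x. x)"
  by (simp add: linmap_def)

lemma linmap_comp: "linmap f \<Longrightarrow> linmap g \<Longrightarrow> linmap (\<lambda>x. f (g x))"
  by (simp add: linmap_def)

lemma linmap_inv: "linmap f \<Longrightarrow> bij f \<Longrightarrow> linmap (inv f)"
  unfolding linmap_def by (metis bij_inv_eq_iff)

lemma sum_keys_bvec: "(\<Sum>i\<in>Poly_Mapping.keys x. smul (Poly_Mapping.lookup x i) (bvec i)) = x"
proof (rule poly_mapping_eqI)
  fix k
  have "(\<Sum>i\<in>Poly_Mapping.keys x. Poly_Mapping.lookup x i * Poly_Mapping.lookup (bvec i) k)
      = (\<Sum>i\<in>Poly_Mapping.keys x. if i = k then Poly_Mapping.lookup x i else 0)"
    by (rule sum.cong) (auto simp: bvec_def lookup_single when_def)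
  also have "\<dots> = Poly_Mapping.lookup x k"
    by (simp add: sum.delta' in_keys_iff)
  finally show "Poly_Mapping.lookup (\<Sum>i\<in>Poly_Mapping.keys x. smul (Poly_Mapping.lookup x i) (bvec i)) k
      = Poly_Mapping.lookup x k"
    by (simp add: lookup_sum)
qed

lemma linmap_eq_linext: "linmap f \<Longrightarrow> f x = linext (\<lambda>i. f (bvec i)) x"
  by (subst sum_keys_bvec[of x, symmetric]) (simp add: linmap_sum linmap_smul linext_def)

lemma linmap_eqI:
  assumes "linmap f" "linmap g" "\<And>i. f (bvec i) = g (bvec i)"
  shows "f x = g x"
  using linmap_eq_linext[OF assms(1), of x] linmap_eq_linext[OF assms(2), of x] assms(3) by simp

lemma linmap_linext_param [simp]: "(\<And>i. linmap (F i)) \<Longrightarrow> linmap (\<lambda>x. linext (\<lambda>i. F i x) z)"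
  unfolding linmap_def linext_def
  by (auto simp: sum.distrib smul_add smul_sum smul_smul mult.commute)

lemma lookup_tensor [simp]:
  "Poly_Mapping.lookup (tensor x y) (a, b) = Poly_Mapping.lookup x a * Poly_Mapping.lookup y b"
proof -
  have "{(a, b). Poly_Mapping.lookup x a * Poly_Mapping.lookup y b \<noteq> 0}
      \<subseteq> Poly_Mapping.keys x \<times> Poly_Mapping.keys y"
    by (auto simp: in_keys_iff)
  then have "finite {(a, b). Poly_Mapping.lookup x a * Poly_Mapping.lookup y b \<noteq> 0}"
    by (rule finite_subset) auto
  then show ?thesis
    unfolding tensor_def by (simp add: case_prod_beta')
qed

lemma lookup_tensor_prod:
  "Poly_Mapping.lookup (tensor x y) p = Poly_Mapping.lookup x (fst p) * Poly_Mapping.lookup y (snd p)"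
  by (cases p) simp

lemma linmap_tensor_left [simp]: "linmap g \<Longrightarrow> linmap (\<lambda>x. tensor (g x) y)"
  by (simp add: linmap_def; intro conjI allI; rule poly_mapping_eqI)
     (simp_all add: lookup_tensor_prod lookup_add distrib_right)

lemma linmap_tensor_right [simp]: "linmap g \<Longrightarrow> linmap (\<lambda>x. tensor y (g x))"
  by (simp add: linmap_def; intro conjI allI; rule poly_mapping_eqI)
     (simp_all add: lookup_tensor_prod lookup_add distrib_left mult.left_commute)

lemma bvec_Pair: "bvec (a, b) = tensor (bvec a) (bvec b)"
  by (rule poly_mapping_eqI) (auto simp: bvec_def lookup_tensor_prod lookup_single when_def)

lemma linmap2_eqI:
  assumes "\<And>y. linmap (\<lambda>x. F x y)" "\<And>x. linmap (\<lambda>y. F x y)"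
    and "\<And>y. linmap (\<lambda>x. G x y)" "\<And>x. linmap (\<lambda>y. G x y)"
    and "\<And>a b. F (bvec a) (bvec b) = G (bvec a) (bvec b)"
  shows "F x y = G x y"
proof -
  have basis: "F (bvec a) y = G (bvec a) y" for a
    by (rule linmap_eqI[where f = "\<lambda>y. F (bvec a) y"]) (use assms in auto)
  show ?thesis
    by (rule linmap_eqI[where f = "\<lambda>x. F x y"]) (use assms basis in auto)
qed

text \<open>
Sweedler notation: \<open>sweedler z F\<close> stands for \<open>\<Sum> F z\<^sub>1 z\<^sub>2\<close>. It is computed from the
expansion of \<open>z\<close> in basis tensors, so it agrees with the sum over another decomposition
\<open>z = \<Sum> z\<^sub>1 \<otimes> z\<^sub>2\<close> only for bilinear \<open>F\<close>.
\<close>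

definition sweedler :: "('a \<times> 'b \<Rightarrow>\<^sub>0 'k::field) \<Rightarrow> (('a \<Rightarrow>\<^sub>0 'k) \<Rightarrow> ('b \<Rightarrow>\<^sub>0 'k) \<Rightarrow> ('c \<Rightarrow>\<^sub>0 'k))
    \<Rightarrow> ('c \<Rightarrow>\<^sub>0 'k)"
  where "sweedler z F = linext (\<lambda>(p, q). F (bvec p) (bvec q)) z"

lemma linmap_sweedler_comp [simp]: "linmap g \<Longrightarrow> linmap (\<lambda>x. sweedler (g x) F)"
  unfolding sweedler_def by (rule linmap_comp[OF linmap_linext])

lemma linmap_sweedler_param [simp]:
  "(\<And>p q. linmap (F p q)) \<Longrightarrow> linmap (\<lambda>x. sweedler z (\<lambda>p q. F p q x))"
  unfolding sweedler_def
  using linmap_linext_param[of "\<lambda>i x. case i of (p, q) \<Rightarrow> F (bvec p) (bvec q) x" z]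
  by (simp add: case_prod_beta)

lemma sweedler_bvec [simp]: "sweedler (bvec (a, b)) F = F (bvec a) (bvec b)"
  by (simp add: sweedler_def)

lemma sweedler_tensor [simp]:
  assumes "\<And>y. linmap (\<lambda>x. F x y)" "\<And>x. linmap (\<lambda>y. F x y)"
  shows "sweedler (tensor x y) F = F x y"
  by (rule linmap2_eqI[where F = "\<lambda>x y. sweedler (tensor x y) F"])
     (use assms in \<open>auto simp: bvec_Pair[symmetric]\<close>)

lemma linmap_sweedler: "linmap f \<Longrightarrow> f (sweedler z F) = sweedler z (\<lambda>p q. f (F p q))"
  by (rule linmap_eqI[where f = "\<lambda>z. f (sweedler z F)"]) (auto intro: linmap_comp[of f])

lemma sweedler_tensor_ident [simp]: "sweedler z (\<lambda>p q. tensor p q) = z"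
  by (rule linmap_eqI[where f = "\<lambda>z. sweedler z tensor"]) (auto simp: bvec_Pair)

lemma sweedler_swap:
  "sweedler z (\<lambda>p q. sweedler w (\<lambda>u v. F p q u v)) = sweedler w (\<lambda>u v. sweedler z (\<lambda>p q. F p q u v))"
  by (rule linmap_eqI[where f = "\<lambda>z. sweedler z (\<lambda>p q. sweedler w (\<lambda>u v. F p q u v))"]) auto

lemma sweedler_cong: "(\<And>p q. F p q = G p q) \<Longrightarrow> sweedler z F = sweedler z G"
  by (metis ext)

lemma sweedler_swap_nested:
  "sweedler x (\<lambda>a b. sweedler (y a b) (\<lambda>c d. sweedler z (\<lambda>e f. F a b c d e f)))
    = sweedler z (\<lambda>e f. sweedler x (\<lambda>a b. sweedler (y a b) (\<lambda>c d. F a b c d e f)))"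
proof -
  have "sweedler x (\<lambda>a b. sweedler (y a b) (\<lambda>c d. sweedler z (\<lambda>e f. F a b c d e f)))
      = sweedler x (\<lambda>a b. sweedler z (\<lambda>e f. sweedler (y a b) (\<lambda>c d. F a b c d e f)))"
    by (rule sweedler_cong, rule sweedler_swap)
  also have "\<dots> = sweedler z (\<lambda>e f. sweedler x (\<lambda>a b. sweedler (y a b) (\<lambda>c d. F a b c d e f)))"
    by (rule sweedler_swap)
  finally show ?thesis .
qed

lemma sweedler_sweedler: "sweedler (sweedler z F) G = sweedler z (\<lambda>p q. sweedler (F p q) G)"
  by (rule linmap_sweedler) simp

lemma tensor_sweedler_left: "tensor (sweedler z F) y = sweedler z (\<lambda>p q. tensor (F p q) y)"
  by (rule linmap_sweedler[where f = "\<lambda>x. tensor x y"]) simp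

lemma tensor_sweedler_right: "tensor y (sweedler z F) = sweedler z (\<lambda>p q. tensor y (F p q))"
  by (rule linmap_sweedler[where f = "\<lambda>x. tensor y x"]) simp

lemma sweedler_tensor_collapse [simp]:
  "sweedler z (\<lambda>v w. tensor X (tensor v w)) = tensor X z"
  "sweedler z (\<lambda>v w. tensor (tensor v w) X) = tensor z X"
  by (simp_all add: tensor_sweedler_left[symmetric] tensor_sweedler_right[symmetric])

lemma linmap_tmap [simp]: "linmap (tmap f g)"
  by (simp add: tmap_def)

lemma linmap_tmap_comp [simp]: "linmap h \<Longrightarrow> linmap (\<lambda>x. tmap f g (h x))"
  by (rule linmap_comp[OF linmap_tmap])

lemma linmap_reidx [simp]: "linmap (reidx f)"
  by (simp add: reidx_def)

lemma linmap_reidx_comp [simp]: "linmap h \<Longrightarrow> linmap (\<lambda>x. reidx f (h x))"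
  by (rule linmap_comp[OF linmap_reidx])

lemma linmap_tassoc_comp [simp]:
  "\<And>h. linmap h \<Longrightarrow> linmap (\<lambda>x. tassoc (h x))"
  "\<And>h. linmap h \<Longrightarrow> linmap (\<lambda>x. tassoc' (h x))"
  "\<And>h. linmap h \<Longrightarrow> linmap (\<lambda>x. tmid (h x))"
  by (simp_all add: tassoc_def tassoc'_def tmid_def)

lemma linmap_id [simp]: "linmap id"
  by (simp add: linmap_def)

lemma linmap_o [simp]: "linmap f \<Longrightarrow> linmap g \<Longrightarrow> linmap (f \<circ> g)"
  unfolding o_def by (rule linmap_comp)

lemma reidx_bvec [simp]: "reidx f (bvec a) = bvec (f a)"
  by (simp add: reidx_def)

lemma tmap_sweedler: "linmap f \<Longrightarrow> linmap g \<Longrightarrow> tmap f g z = sweedler z (\<lambda>p q. tensor (f p) (g q))"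
  by (rule linmap_eqI[where f = "tmap f g"]) (auto simp: tmap_def)

lemma tassoc_sweedler: "tassoc z = sweedler z (\<lambda>X w. sweedler X (\<lambda>u v. tensor u (tensor v w)))"
  by (rule linmap_eqI[where f = tassoc]) (auto simp: tassoc_def bvec_Pair)

lemma tassoc'_sweedler: "tassoc' z = sweedler z (\<lambda>u X. sweedler X (\<lambda>v w. tensor (tensor u v) w))"
  by (rule linmap_eqI[where f = tassoc']) (auto simp: tassoc'_def bvec_Pair)

lemma tmid_sweedler:
  "tmid z = sweedler z (\<lambda>X Y. sweedler X (\<lambda>p q. sweedler Y (\<lambda>u v. tensor (tensor p u) (tensor q v))))"
  by (rule linmap_eqI[where f = tmid]) (auto simp: tmid_def bvec_Pair)

lemma reidx_flip_sweedler:
  "reidx (\<lambda>((a, b), c). ((a, c), b)) z = sweedler z (\<lambda>X w. sweedler X (\<lambda>u v. tensor (tensor u w) v))"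
  by (rule linmap_eqI[where f = "reidx (\<lambda>((a, b), c). ((a, c), b))"]) (auto simp: bvec_Pair)

lemma tensor_mul_sweedler:
  assumes "linmap m1" "linmap m2"
  shows "tensor_mul m1 m2 z = sweedler z (\<lambda>X Y. sweedler X (\<lambda>p q. sweedler Y (\<lambda>u v.
      tensor (m1 (tensor p u)) (m2 (tensor q v)))))"
  unfolding tensor_mul_def
  by (simp add: assms tmid_sweedler tmap_sweedler sweedler_sweedler tensor_sweedler_left
      tensor_sweedler_right)

lemma linmap_eq_on_pure_tensors:
  assumes "\<And>a h. f (tensor a h) = g (tensor a h)" and "linmap f" "linmap g"
  shows "f x = g x"
  by (rule linmap_eqI[OF assms(2,3)]) (metis assms(1) bvec_Pair old.prod.exhaust)

lemma linmap2_eq_on_pure_tensors: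
  assumes "\<And>a h b g. F (tensor a h) (tensor b g) = G (tensor a h) (tensor b g)"
    and "\<And>y. linmap (\<lambda>x. F x y)" "\<And>x. linmap (\<lambda>y. F x y)"
    and "\<And>y. linmap (\<lambda>x. G x y)" "\<And>x. linmap (\<lambda>y. G x y)"
  shows "F x y = G x y"
proof -
  have pure: "F (tensor a h) y = G (tensor a h) y" for a h
    by (rule linmap_eq_on_pure_tensors[where f = "F (tensor a h)"]) (use assms in auto)
  show ?thesis
    by (rule linmap_eq_on_pure_tensors[where f = "\<lambda>x. F x y"]) (use assms pure in auto)
qed

lemma linmap3_eq_on_pure_tensors:
  assumes "\<And>a h b g c f.
      F (tensor a h) (tensor b g) (tensor c f) = G (tensor a h) (tensor b g) (tensor c f)"
    and "\<And>y z. linmap (\<lambda>x. F x y z)" "\<And>x z. linmap (\<lambda>y. F x y z)" "\<And>x y. linmap (\<lambda>z. F x y z)"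
    and "\<And>y z. linmap (\<lambda>x. G x y z)" "\<And>x z. linmap (\<lambda>y. G x y z)" "\<And>x y. linmap (\<lambda>z. G x y z)"
  shows "F x y z = G x y z"
proof -
  have pure: "F (tensor a h) y z = G (tensor a h) y z" for a h
    by (rule linmap2_eq_on_pure_tensors[where F = "F (tensor a h)"]) (use assms in auto)
  show ?thesis
    by (rule linmap_eq_on_pure_tensors[where f = "\<lambda>x. F x y z"]) (use assms pure in auto)
qed

locale hom_smash_data =
  fixes muH :: "('i \<times> 'i \<Rightarrow>\<^sub>0 'k::field) \<Rightarrow> ('i \<Rightarrow>\<^sub>0 'k)"
    and deH :: "('i \<Rightarrow>\<^sub>0 'k) \<Rightarrow> ('i \<times> 'i \<Rightarrow>\<^sub>0 'k)"
    and alH :: "('i \<Rightarrow>\<^sub>0 'k) \<Rightarrow> ('i \<Rightarrow>\<^sub>0 'k)"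
    and muA :: "('j \<times> 'j \<Rightarrow>\<^sub>0 'k) \<Rightarrow> ('j \<Rightarrow>\<^sub>0 'k)"
    and alA :: "('j \<Rightarrow>\<^sub>0 'k) \<Rightarrow> ('j \<Rightarrow>\<^sub>0 'k)"
    and act :: "('i \<times> 'j \<Rightarrow>\<^sub>0 'k) \<Rightarrow> ('j \<Rightarrow>\<^sub>0 'k)"
    and la :: "('j \<Rightarrow>\<^sub>0 'k) \<Rightarrow> ('i \<times> 'j \<Rightarrow>\<^sub>0 'k)"
  assumes bialgebra: "hom_bialgebra muH deH alH"
    and module_algebra: "module_hom_algebra muH deH alH muA alA act"
    and bij_alH: "bij alH" and bij_alA: "bij alA"
    and comodule_algebra: "left_comodule_hom_algebra muH deH alH muA alA la"
    and yetter_drinfeld: "yd_module muH deH alH alA act la"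
begin

abbreviation "mH x y \<equiv> muH (tensor x y)"
abbreviation "mA x y \<equiv> muA (tensor x y)"
abbreviation "ac h m \<equiv> act (tensor h m)"
abbreviation "bi \<equiv> inv alH"
abbreviation "ai \<equiv> inv alA"

lemma linmap_structure_maps [simp]:
  "linmap muH" "linmap deH" "linmap alH" "linmap muA" "linmap alA" "linmap act" "linmap la"
  using bialgebra module_algebra comodule_algebra
  unfolding hom_bialgebra_def hom_assoc_def module_hom_algebra_def left_module_def
    left_comodule_hom_algebra_def left_comodule_def by auto

lemma linmap_bi [simp]: "linmap bi" and linmap_ai [simp]: "linmap ai"
  by (simp_all add: linmap_inv bij_alH bij_alA)

lemma linmap_structure_maps_comp [simp]:
  "\<And>g. linmap g \<Longrightarrow> linmap (\<lambda>x. muH (g x))" "\<And>g. linmap g \<Longrightarrow> linmap (\<lambda>x. deH (g x))"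
  "\<And>g. linmap g \<Longrightarrow> linmap (\<lambda>x. alH (g x))" "\<And>g. linmap g \<Longrightarrow> linmap (\<lambda>x. muA (g x))"
  "\<And>g. linmap g \<Longrightarrow> linmap (\<lambda>x. alA (g x))" "\<And>g. linmap g \<Longrightarrow> linmap (\<lambda>x. act (g x))"
  "\<And>g. linmap g \<Longrightarrow> linmap (\<lambda>x. la (g x))" "\<And>g. linmap g \<Longrightarrow> linmap (\<lambda>x. bi (g x))"
  "\<And>g. linmap g \<Longrightarrow> linmap (\<lambda>x. ai (g x))"
  by (simp_all add: linmap_comp)

lemma structure_maps_sweedler [simp]:
  "\<And>z F. muH (sweedler z F) = sweedler z (\<lambda>p q. muH (F p q))"
  "\<And>z F. deH (sweedler z F) = sweedler z (\<lambda>p q. deH (F p q))"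
  "\<And>z F. alH (sweedler z F) = sweedler z (\<lambda>p q. alH (F p q))"
  "\<And>z F. muA (sweedler z F) = sweedler z (\<lambda>p q. muA (F p q))"
  "\<And>z F. alA (sweedler z F) = sweedler z (\<lambda>p q. alA (F p q))"
  "\<And>z F. act (sweedler z F) = sweedler z (\<lambda>p q. act (F p q))"
  "\<And>z F. la (sweedler z F) = sweedler z (\<lambda>p q. la (F p q))"
  "\<And>z F. bi (sweedler z F) = sweedler z (\<lambda>p q. bi (F p q))"
  "\<And>z F. ai (sweedler z F) = sweedler z (\<lambda>p q. ai (F p q))"
  by (simp_all add: linmap_sweedler)

declare sweedler_sweedler [simp] tensor_sweedler_left [simp] tensor_sweedler_right [simp]

lemma alpha_inverse [simp]: "alH (bi x) = x" "bi (alH x) = x" "alA (ai y) = y" "ai (alA y) = y"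
  using bij_alH bij_alA by (auto simp: bij_def surj_f_inv_f)

lemma alH_mH [simp]: "alH (mH x y) = mH (alH x) (alH y)"
  using bialgebra unfolding hom_bialgebra_def hom_assoc_def by blast

lemma mH_assoc [simp]: "mH (mH x y) z = mH (alH x) (mH y (bi z))"
  using bialgebra unfolding hom_bialgebra_def hom_assoc_def by (metis alpha_inverse(1))

lemma deH_coassoc: "tassoc (tmap deH alH (deH h)) = tmap alH deH (deH h)"
  using bialgebra unfolding hom_bialgebra_def by blast

lemma deH_mH [simp]:
  "deH (mH h k) = sweedler (deH h) (\<lambda>p q. sweedler (deH k) (\<lambda>u v. tensor (mH p u) (mH q v)))"
  using bialgebra unfolding hom_bialgebra_def by (simp add: tensor_mul_sweedler)

lemma deH_alH [simp]: "deH (alH h) = sweedler (deH h) (\<lambda>p q. tensor (alH p) (alH q))"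
  using bialgebra unfolding hom_bialgebra_def by (simp add: tmap_sweedler)

lemma bi_mH [simp]: "bi (mH x y) = mH (bi x) (bi y)"
  by (metis alH_mH alpha_inverse(1,2))

lemma deH_bi [simp]: "deH (bi h) = sweedler (deH h) (\<lambda>p q. tensor (bi p) (bi q))"
proof -
  have "sweedler (deH (alH (bi h))) (\<lambda>p q. tensor (bi p) (bi q)) = deH (bi h)"
    by (simp only: deH_alH sweedler_sweedler) simp
  then show ?thesis by simp
qed

lemma alA_mA [simp]: "alA (mA x y) = mA (alA x) (alA y)"
  using module_algebra unfolding module_hom_algebra_def hom_assoc_def by blast

lemma mA_assoc [simp]: "mA (mA x y) z = mA (alA x) (mA y (ai z))"
  using module_algebra unfolding module_hom_algebra_def hom_assoc_def by (metis alpha_inverse(3))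

lemma ai_mA [simp]: "ai (mA x y) = mA (ai x) (ai y)"
  by (metis alA_mA alpha_inverse(3,4))

lemma alA_ac [simp]: "alA (ac h m) = ac (alH h) (alA m)"
  using module_algebra unfolding module_hom_algebra_def left_module_def by blast

lemma ai_ac [simp]: "ai (ac h m) = ac (bi h) (ai m)"
  by (metis alA_ac alpha_inverse)

lemma ac_ac [simp]: "ac h (ac h' m) = ac (mH (bi h) h') (alA m)"
  using module_algebra unfolding module_hom_algebra_def left_module_def
  by (metis alpha_inverse(1))

lemma ac_mA [simp]:
  "ac h (mA a a') = sweedler (deH (bi (bi h))) (\<lambda>p q. mA (ac p a) (ac q a'))"
proof -
  have "ac (alH (alH (bi (bi h)))) (mA a a')
      = muA (tmap act act (tmid (tensor (deH (bi (bi h))) (tensor a a'))))"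
    using module_algebra unfolding module_hom_algebra_def by blast
  then show ?thesis
    by (simp add: tmid_sweedler tmap_sweedler del: deH_bi)
qed

lemma la_alA [simp]: "la (alA m) = sweedler (la m) (\<lambda>p q. tensor (alH p) (alA q))"
  using comodule_algebra unfolding left_comodule_hom_algebra_def left_comodule_def
  by (metis linmap_structure_maps(3,5) tmap_sweedler)

lemma la_coassoc: "tassoc (tmap deH alA (la m)) = tmap alH la (la m)"
  using comodule_algebra unfolding left_comodule_hom_algebra_def left_comodule_def by blast

lemma la_mA [simp]:
  "la (mA a a') = sweedler (la a) (\<lambda>p q. sweedler (la a') (\<lambda>u v. tensor (mH p u) (mA q v)))"
  using comodule_algebra unfolding left_comodule_hom_algebra_def hom_alg_morphism_def
  by (simp add: tensor_mul_sweedler)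

lemma la_ai [simp]: "la (ai m) = sweedler (la m) (\<lambda>p q. tensor (bi p) (ai q))"
proof -
  have "sweedler (la (alA (ai m))) (\<lambda>p q. tensor (bi p) (ai q)) = la (ai m)"
    by (simp only: la_alA sweedler_sweedler) simp
  then show ?thesis by simp
qed

lemma deH_coassoc_sweedler:
  assumes "\<And>v w. linmap (\<lambda>u. G u v w)" "\<And>u w. linmap (\<lambda>v. G u v w)" "\<And>u v. linmap (\<lambda>w. G u v w)"
  shows "sweedler (deH h) (\<lambda>p r. sweedler (deH p) (\<lambda>u v. G u v (alH r)))
    = sweedler (deH h) (\<lambda>p r. sweedler (deH r) (\<lambda>v w. G (alH p) v w))"
proof -
  have "sweedler (tassoc (tmap deH alH (deH h))) (\<lambda>u Y. sweedler Y (\<lambda>v w. G u v w))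
      = sweedler (tmap alH deH (deH h)) (\<lambda>u Y. sweedler Y (\<lambda>v w. G u v w))"
    by (simp only: deH_coassoc)
  then show ?thesis
    by (simp add: tassoc_sweedler tmap_sweedler assms)
qed

lemma la_coassoc_sweedler:
  assumes "\<And>v w. linmap (\<lambda>u. G u v w)" "\<And>u w. linmap (\<lambda>v. G u v w)" "\<And>u v. linmap (\<lambda>w. G u v w)"
  shows "sweedler (la m) (\<lambda>p r. sweedler (deH p) (\<lambda>u v. G u v (alA r)))
    = sweedler (la m) (\<lambda>p r. sweedler (la r) (\<lambda>v w. G (alH p) v w))"
proof -
  have "sweedler (tassoc (tmap deH alA (la m))) (\<lambda>u Y. sweedler Y (\<lambda>v w. G u v w))
      = sweedler (tmap alH la (la m)) (\<lambda>u Y. sweedler Y (\<lambda>v w. G u v w))"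
    by (simp only: la_coassoc)
  then show ?thesis
    by (simp add: tassoc_sweedler tmap_sweedler assms)
qed

lemma yetter_drinfeld_sweedler:
  assumes "\<And>y. linmap (\<lambda>x. F x y)" "\<And>x. linmap (\<lambda>y. F x y)"
  shows "sweedler (deH h) (\<lambda>u v. sweedler (la (ac u m)) (\<lambda>x z. F (mH x (alH (alH v))) z))
    = sweedler (deH h) (\<lambda>p q. sweedler (la m) (\<lambda>u v. F (mH (alH (alH p)) (alH u)) (ac (alH q) v)))"
proof -
  have "tmap muH id (reidx (\<lambda>((x, z), y). ((x, y), z)) (tmap la id (tmap act (alH \<circ> alH)
        (reidx (\<lambda>((a, b), c). ((a, c), b)) (tensor (deH h) m)))))
      = tmap (\<lambda>u. muH (tmap (alH \<circ> alH) alH u)) (\<lambda>v. act (tmap alH id v))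
          (tmid (tensor (deH h) (la m)))"
    using yetter_drinfeld unfolding yd_module_def by blast
  then have "sweedler (deH h) (\<lambda>u v. sweedler (la (ac u m)) (\<lambda>x z. tensor (mH x (alH (alH v))) z))
      = sweedler (deH h) (\<lambda>p q. sweedler (la m) (\<lambda>u v.
          tensor (mH (alH (alH p)) (alH u)) (ac (alH q) v)))"
    by (simp add: tmap_sweedler reidx_flip_sweedler tmid_sweedler)
  then have "sweedler (sweedler (deH h) (\<lambda>u v. sweedler (la (ac u m)) (\<lambda>x z.
        tensor (mH x (alH (alH v))) z))) F
      = sweedler (sweedler (deH h) (\<lambda>p q. sweedler (la m) (\<lambda>u v.
        tensor (mH (alH (alH p)) (alH u)) (ac (alH q) v)))) F"
    by (rule arg_cong)
  then show ?thesis
    by (simp add: assms)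
qed

abbreviation "M \<equiv> smash_mul muH deH alH muA alA act"
abbreviation "AL \<equiv> tmap alA alH"
abbreviation "LA \<equiv> smash_lambda muH deH la"
abbreviation "RH \<equiv> smash_rho deH alA"

lemma linmap_smash_maps [simp]: "linmap M" "linmap LA" "linmap RH"
  unfolding smash_mul_def smash_lambda_def[abs_def] smash_rho_def[abs_def] by simp_all

lemma linmap_smash_maps_comp [simp]:
  "\<And>g. linmap g \<Longrightarrow> linmap (\<lambda>x. M (g x))"
  "\<And>g. linmap g \<Longrightarrow> linmap (\<lambda>x. LA (g x))"
  "\<And>g. linmap g \<Longrightarrow> linmap (\<lambda>x. RH (g x))"
  by (simp_all add: linmap_comp)

lemma smash_maps_sweedler [simp]:
  "M (sweedler z F) = sweedler z (\<lambda>p q. M (F p q))"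
  "\<And>z F. LA (sweedler z F) = sweedler z (\<lambda>p q. LA (F p q))"
  "\<And>z F. RH (sweedler z F) = sweedler z (\<lambda>p q. RH (F p q))"
  by (simp_all add: linmap_sweedler)

lemma smash_mul_pure [simp]:
  "M (tensor (tensor a h) (tensor b g))
    = sweedler (deH h) (\<lambda>p q. tensor (mA a (ac (bi (bi p)) (ai b))) (mH (bi q) g))"
proof -
  have "M (tensor x y) = sweedler x (\<lambda>a h. sweedler y (\<lambda>b g.
      sweedler (deH h) (\<lambda>p q. tensor (mA a (ac (bi (bi p)) (ai b))) (mH (bi q) g))))" for x y
  proof (rule linmap2_eqI[where F = "\<lambda>x y. M (tensor x y)"])
    fix i j :: "'j \<times> 'i"
    obtain a h b g where ij: "i = (a, h)" "j = (b, g)"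
      by (cases i, cases j)
    have "M (tensor (bvec i) (bvec j)) = M (bvec (i, j))"
      by (simp only: bvec_Pair)
    then show "M (tensor (bvec i) (bvec j)) = sweedler (bvec i) (\<lambda>a h. sweedler (bvec j) (\<lambda>b g.
        sweedler (deH h) (\<lambda>p q. tensor (mA a (ac (bi (bi p)) (ai b))) (mH (bi q) g))))"
      by (simp add: smash_mul_def smash_term_def ij tmap_sweedler)
  qed simp_all
  then show ?thesis by simp
qed

lemma smash_alpha_pure [simp]: "AL (tensor a h) = tensor (alA a) (alH h)"
  by (simp add: tmap_sweedler)

lemma smash_lambda_pure [simp]:
  "LA (tensor a h) = sweedler (la a) (\<lambda>u v. sweedler (deH h) (\<lambda>s t. tensor (mH u s) (tensor v t)))"
  by (simp add: smash_lambda_def tmap_sweedler tmid_sweedler)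

lemma smash_rho_pure [simp]:
  "RH (tensor a h) = sweedler (deH h) (\<lambda>s t. tensor (tensor (alA a) s) t)"
  by (simp add: smash_rho_def tmap_sweedler tassoc'_sweedler)

lemma smash_alpha_mult: "AL (M (tensor x y)) = M (tensor (AL x) (AL y))"
  (is "?F x y = ?G x y")
  by (rule linmap2_eq_on_pure_tensors[where F = ?F and G = ?G]) (simp_all add: tmap_sweedler)

lemma smash_mult_hom_assoc: "M (tensor (AL x) (M (tensor y z))) = M (tensor (M (tensor x y)) (AL z))"
  (is "?F x y z = ?G x y z")
proof (rule linmap3_eq_on_pure_tensors[where F = ?F and G = ?G])
  fix a h b g c f
  define T where "T p q s v w = tensor
      (mA (alA a) (mA (ac (bi (bi s)) (ai b)) (ac (mH (bi (bi (bi (bi v)))) (bi (bi (bi p)))) (ai c))))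
      (mH (bi w) (mH (bi q) f))" for p q s v w
  have coassoc: "sweedler (deH h) (\<lambda>s r. sweedler (deH s) (\<lambda>u v. T p q (bi u) v (alH r)))
      = sweedler (deH h) (\<lambda>s r. sweedler (deH r) (\<lambda>v w. T p q s v w))" for p q
    using deH_coassoc_sweedler[where G = "\<lambda>u v w. T p q (bi u) v w" and h = h] by (simp add: T_def)
  have "?F (tensor a h) (tensor b g) (tensor c f)
      = sweedler (deH g) (\<lambda>p q. sweedler (deH h) (\<lambda>s r. sweedler (deH s) (\<lambda>u v. T p q (bi u) v (alH r))))"
    by (simp add: T_def)
  also have "\<dots> = sweedler (deH g) (\<lambda>p q. sweedler (deH h) (\<lambda>s r. sweedler (deH r) (\<lambda>v w. T p q s v w)))"
    by (simp only: coassoc)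
  also have "\<dots> = sweedler (deH h) (\<lambda>s r. sweedler (deH r) (\<lambda>v w. sweedler (deH g) (\<lambda>p q. T p q s v w)))"
    by (subst sweedler_swap) (rule sweedler_cong, rule sweedler_swap)
  also have "\<dots> = ?G (tensor a h) (tensor b g) (tensor c f)"
    by (simp add: T_def)
  finally show "?F (tensor a h) (tensor b g) (tensor c f) = ?G (tensor a h) (tensor b g) (tensor c f)" .
qed simp_all

lemma smash_lambda_alpha: "tmap alH AL (LA x) = LA (AL x)"
  (is "?f x = ?g x")
  by (rule linmap_eq_on_pure_tensors[where f = ?f and g = ?g]) (simp_all add: tmap_sweedler)

lemma smash_rho_alpha: "tmap AL alH (RH x) = RH (AL x)"
  (is "?f x = ?g x")
  by (rule linmap_eq_on_pure_tensors[where f = ?f and g = ?g]) (simp_all add: tmap_sweedler)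

lemma smash_rho_coassoc: "tmap AL deH (RH x) = tassoc (tmap RH alH (RH x))"
  (is "?f x = ?g x")
proof (rule linmap_eq_on_pure_tensors[where f = ?f and g = ?g])
  fix a h
  have "?g (tensor a h) = sweedler (deH h) (\<lambda>p r. sweedler (deH p) (\<lambda>u v.
      tensor (tensor (alA (alA a)) u) (tensor v (alH r))))"
    by (simp add: tmap_sweedler tassoc_sweedler)
  also have "\<dots> = sweedler (deH h) (\<lambda>p r. sweedler (deH r) (\<lambda>v w.
      tensor (tensor (alA (alA a)) (alH p)) (tensor v w)))"
    by (rule deH_coassoc_sweedler[where G = "\<lambda>u v w. tensor (tensor (alA (alA a)) u) (tensor v w)"])
       simp_all
  also have "\<dots> = ?f (tensor a h)"
    by (simp add: tmap_sweedler)
  finally show "?f (tensor a h) = ?g (tensor a h)" ..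
qed simp_all

lemma smash_lambda_rho_compat: "tassoc (tmap LA alH (RH x)) = tmap alH RH (LA x)"
  (is "?f x = ?g x")
proof (rule linmap_eq_on_pure_tensors[where f = ?f and g = ?g])
  fix a h
  have "?f (tensor a h) = sweedler (la a) (\<lambda>x y. sweedler (deH h) (\<lambda>p r. sweedler (deH p) (\<lambda>u v.
      tensor (mH (alH x) u) (tensor (tensor (alA y) v) (alH r)))))"
    by (simp add: tmap_sweedler tassoc_sweedler) (rule sweedler_swap)
  also have "\<dots> = sweedler (la a) (\<lambda>x y. sweedler (deH h) (\<lambda>p r. sweedler (deH r) (\<lambda>v w.
      tensor (mH (alH x) (alH p)) (tensor (tensor (alA y) v) w))))"
    by (rule sweedler_cong, rule deH_coassoc_sweedler) simp_all
  also have "\<dots> = ?g (tensor a h)"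
    by (simp add: tmap_sweedler)
  finally show "?f (tensor a h) = ?g (tensor a h)" .
qed simp_all

lemma smash_lambda_coassoc: "tassoc (tmap deH AL (LA x)) = tmap alH LA (LA x)"
  (is "?f x = ?g x")
proof (rule linmap_eq_on_pure_tensors[where f = ?f and g = ?g])
  fix a h
  define T where "T u1 u2 (v :: 'j \<Rightarrow>\<^sub>0 'k) s1 s2 (t :: 'i \<Rightarrow>\<^sub>0 'k) =
      tensor (mH u1 s1) (tensor (mH u2 s2) (tensor v t))"
    for u1 u2 v s1 s2 t
  have deH_coassoc: "sweedler (deH h) (\<lambda>s t. sweedler (deH s) (\<lambda>s1 s2. T u1 u2 v s1 s2 (alH t)))
      = sweedler (deH h) (\<lambda>s t. sweedler (deH t) (\<lambda>s1 s2. T u1 u2 v (alH s) s1 s2))" for u1 u2 v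
    by (rule deH_coassoc_sweedler[where G = "T u1 u2 v"]) (simp_all add: T_def)
  have la_coassoc: "sweedler (la a) (\<lambda>u v. sweedler (deH u) (\<lambda>u1 u2.
        sweedler (deH h) (\<lambda>s t. sweedler (deH t) (\<lambda>s1 s2. T u1 u2 (alA v) (alH s) s1 s2))))
      = sweedler (la a) (\<lambda>u v. sweedler (la v) (\<lambda>x y.
        sweedler (deH h) (\<lambda>s t. sweedler (deH t) (\<lambda>s1 s2. T (alH u) x y (alH s) s1 s2))))"
    by (rule la_coassoc_sweedler[where G = "\<lambda>u1 u2 w.
          sweedler (deH h) (\<lambda>s t. sweedler (deH t) (\<lambda>s1 s2. T u1 u2 w (alH s) s1 s2))"])
       (simp_all add: T_def)
  have "?f (tensor a h) = sweedler (la a) (\<lambda>u v. sweedler (deH h) (\<lambda>s t.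
      sweedler (deH u) (\<lambda>u1 u2. sweedler (deH s) (\<lambda>s1 s2. T u1 u2 (alA v) s1 s2 (alH t)))))"
    by (simp add: T_def tmap_sweedler tassoc_sweedler)
  also have "\<dots> = sweedler (la a) (\<lambda>u v. sweedler (deH u) (\<lambda>u1 u2.
      sweedler (deH h) (\<lambda>s t. sweedler (deH s) (\<lambda>s1 s2. T u1 u2 (alA v) s1 s2 (alH t)))))"
    by (rule sweedler_cong, rule sweedler_swap)
  also have "\<dots> = sweedler (la a) (\<lambda>u v. sweedler (deH u) (\<lambda>u1 u2.
      sweedler (deH h) (\<lambda>s t. sweedler (deH t) (\<lambda>s1 s2. T u1 u2 (alA v) (alH s) s1 s2))))"
    by (simp only: deH_coassoc)
  also have "\<dots> = sweedler (la a) (\<lambda>u v. sweedler (la v) (\<lambda>x y.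
      sweedler (deH h) (\<lambda>s t. sweedler (deH t) (\<lambda>s1 s2. T (alH u) x y (alH s) s1 s2))))"
    by (rule la_coassoc)
  also have "\<dots> = sweedler (la a) (\<lambda>u v. sweedler (deH h) (\<lambda>s t.
      sweedler (la v) (\<lambda>x y. sweedler (deH t) (\<lambda>s1 s2. T (alH u) x y (alH s) s1 s2))))"
    by (rule sweedler_cong, rule sweedler_swap)
  also have "\<dots> = ?g (tensor a h)"
    by (simp add: T_def tmap_sweedler)
  finally show "?f (tensor a h) = ?g (tensor a h)" .
qed simp_all

lemma smash_rho_mult: "RH (M (tensor x y)) = tensor_mul M muH (tensor (RH x) (RH y))"
  (is "?F x y = ?G x y")
proof (rule linmap2_eq_on_pure_tensors[where F = ?F and G = ?G])
  fix a h b g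
  define T where "T p q s v w =
      tensor (tensor (mA (alA a) (ac (bi s) b)) (mH (bi v) p)) (mH (bi w) q)" for p q s v w
  have coassoc: "sweedler (deH h) (\<lambda>s r. sweedler (deH s) (\<lambda>u v. T p q (bi u) v (alH r)))
      = sweedler (deH h) (\<lambda>s r. sweedler (deH r) (\<lambda>v w. T p q s v w))" for p q
    using deH_coassoc_sweedler[where G = "\<lambda>u v w. T p q (bi u) v w" and h = h] by (simp add: T_def)
  have "?G (tensor a h) (tensor b g)
      = sweedler (deH g) (\<lambda>p q. sweedler (deH h) (\<lambda>s r. sweedler (deH s) (\<lambda>u v. T p q (bi u) v (alH r))))"
    by (simp add: T_def tensor_mul_sweedler)
  also have "\<dots> = sweedler (deH g) (\<lambda>p q. sweedler (deH h) (\<lambda>s r. sweedler (deH r) (\<lambda>v w. T p q s v w)))"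
    by (simp only: coassoc)
  also have "\<dots> = sweedler (deH h) (\<lambda>s r. sweedler (deH r) (\<lambda>v w. sweedler (deH g) (\<lambda>p q. T p q s v w)))"
    by (subst sweedler_swap) (rule sweedler_cong, rule sweedler_swap)
  also have "\<dots> = ?F (tensor a h) (tensor b g)"
    by (simp add: T_def tmap_sweedler)
  finally show "?F (tensor a h) (tensor b g) = ?G (tensor a h) (tensor b g)" ..
qed (simp_all add: tensor_mul_def)

text \<open>
Both sides of the multiplicativity of \<open>\<lambda>\<close> on \<open>(a # h)(b # g)\<close> reduce to Sweedler sums of
the following term; they differ exactly by the two sides of the Yetter-Drinfeld condition.
\<close>

definition lambda_mult_term where
  "lambda_mult_term a g h2 W z = sweedler (la a) (\<lambda>a1 a0. sweedler (deH g) (\<lambda>g1 g2.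
      tensor (mH (alH a1) (mH (bi W) g1)) (tensor (mA a0 z) (mH h2 g2))))"

lemma smash_lambda_mult_pure_left:
  "LA (M (tensor (tensor a h) (tensor b g))) = sweedler (deH h) (\<lambda>k h2.
    sweedler (deH (bi (bi (bi k)))) (\<lambda>u v. sweedler (la (ac u (ai b))) (\<lambda>x z.
      lambda_mult_term a g h2 (mH x (alH (alH v))) z)))"
proof -
  define T where "T x1 x0 k h2 = sweedler (la a) (\<lambda>a1 a0. sweedler (deH g) (\<lambda>g1 g2.
      tensor (mH (alH a1) (mH x1 (mH (bi (bi k)) (bi g1)))) (tensor (mA a0 x0) (mH h2 g2))))"
    for x1 x0 k h2
  have "LA (M (tensor (tensor a h) (tensor b g))) = sweedler (deH h) (\<lambda>p q. sweedler (la a) (\<lambda>a1 a0.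
      sweedler (la (ac (bi (bi p)) (ai b))) (\<lambda>x1 x0. sweedler (deH q) (\<lambda>q1 q2.
        sweedler (deH g) (\<lambda>g1 g2. tensor (mH (alH a1) (mH x1 (mH (bi (bi q1)) (bi g1))))
          (tensor (mA a0 x0) (mH (bi q2) g2)))))))"
    by simp
  also have "\<dots> = sweedler (deH h) (\<lambda>p q. sweedler (deH q) (\<lambda>q1 q2.
      sweedler (la (ac (bi (bi p)) (ai b))) (\<lambda>x1 x0. T x1 x0 q1 (bi q2))))"
    unfolding T_def
    by (rule sweedler_cong, subst sweedler_swap_nested, rule sweedler_cong, rule sweedler_swap)
  also have "\<dots> = sweedler (deH h) (\<lambda>k h2. sweedler (deH k) (\<lambda>k1 k2.
      sweedler (la (ac (bi (bi (bi k1))) (ai b))) (\<lambda>x1 x0. T x1 x0 k2 h2)))"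
    using deH_coassoc_sweedler[where G = "\<lambda>u v w.
        sweedler (la (ac (bi (bi (bi u))) (ai b))) (\<lambda>x1 x0. T x1 x0 v (bi w))" and h = h]
    by (simp add: T_def)
  also have "\<dots> = sweedler (deH h) (\<lambda>k h2. sweedler (deH (bi (bi (bi k)))) (\<lambda>u v.
      sweedler (la (ac u (ai b))) (\<lambda>x z. lambda_mult_term a g h2 (mH x (alH (alH v))) z)))"
    by (simp add: T_def lambda_mult_term_def)
  finally show ?thesis .
qed

lemma smash_lambda_mult_pure_right:
  "tensor_mul muH M (tensor (LA (tensor a h)) (LA (tensor b g))) = sweedler (deH h) (\<lambda>k h2.
    sweedler (deH (bi (bi (bi k)))) (\<lambda>p q. sweedler (la (ai b)) (\<lambda>u v.
      lambda_mult_term a g h2 (mH (alH (alH p)) (alH u)) (ac (alH q) v))))"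
proof -
  define T where "T b1 b0 a1 a0 s v w g1 g2 = tensor (mH (alH a1) (mH s (mH (bi b1) (bi g1))))
      (tensor (mA a0 (ac (bi (bi v)) (ai b0))) (mH w g2))" for b1 b0 a1 a0 s v w g1 g2
  have "sweedler (deH h) (\<lambda>k h2. sweedler (deH (bi (bi (bi k)))) (\<lambda>p q. sweedler (la (ai b)) (\<lambda>u v.
        lambda_mult_term a g h2 (mH (alH (alH p)) (alH u)) (ac (alH q) v))))
      = sweedler (deH h) (\<lambda>k h2. sweedler (deH k) (\<lambda>k1 k2. sweedler (la b) (\<lambda>b1 b0.
          sweedler (la a) (\<lambda>a1 a0. sweedler (deH g) (\<lambda>g1 g2. T b1 b0 a1 a0 (bi k1) k2 h2 g1 g2)))))"
    by (simp add: T_def lambda_mult_term_def)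
  also have "\<dots> = sweedler (deH h) (\<lambda>s r. sweedler (deH r) (\<lambda>v w. sweedler (la b) (\<lambda>b1 b0.
      sweedler (la a) (\<lambda>a1 a0. sweedler (deH g) (\<lambda>g1 g2. T b1 b0 a1 a0 s v (bi w) g1 g2)))))"
    using deH_coassoc_sweedler[where G = "\<lambda>u v w. sweedler (la b) (\<lambda>b1 b0. sweedler (la a) (\<lambda>a1 a0.
        sweedler (deH g) (\<lambda>g1 g2. T b1 b0 a1 a0 (bi u) v (bi w) g1 g2)))" and h = h]
    by (simp add: T_def)
  also have "\<dots> = sweedler (la b) (\<lambda>b1 b0. sweedler (deH h) (\<lambda>s r. sweedler (deH r) (\<lambda>v w.
      sweedler (deH g) (\<lambda>g1 g2. sweedler (la a) (\<lambda>a1 a0. T b1 b0 a1 a0 s v (bi w) g1 g2)))))"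
    by (subst sweedler_swap_nested) (intro sweedler_cong sweedler_swap)
  also have "\<dots> = sweedler (la b) (\<lambda>b1 b0. sweedler (deH g) (\<lambda>g1 g2. sweedler (la a) (\<lambda>a1 a0.
      sweedler (deH h) (\<lambda>s r. sweedler (deH r) (\<lambda>v w. T b1 b0 a1 a0 s v (bi w) g1 g2)))))"
    by (rule sweedler_cong, subst sweedler_swap_nested, rule sweedler_cong, rule sweedler_swap_nested)
  also have "\<dots> = tensor_mul muH M (tensor (LA (tensor a h)) (LA (tensor b g)))"
    by (simp add: T_def tensor_mul_sweedler)
  finally show ?thesis ..
qed

lemma smash_lambda_mult: "LA (M (tensor x y)) = tensor_mul muH M (tensor (LA x) (LA y))"
  (is "?F x y = ?G x y")
proof (rule linmap2_eq_on_pure_tensors[where F = ?F and G = ?G])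
  fix a h b g
  have "sweedler (deH (bi (bi (bi k)))) (\<lambda>u v. sweedler (la (ac u (ai b))) (\<lambda>x z.
        lambda_mult_term a g h2 (mH x (alH (alH v))) z))
      = sweedler (deH (bi (bi (bi k)))) (\<lambda>p q. sweedler (la (ai b)) (\<lambda>u v.
        lambda_mult_term a g h2 (mH (alH (alH p)) (alH u)) (ac (alH q) v)))" for k h2
    by (rule yetter_drinfeld_sweedler) (simp_all add: lambda_mult_term_def)
  then show "?F (tensor a h) (tensor b g) = ?G (tensor a h) (tensor b g)"
    by (simp only: smash_lambda_mult_pure_left smash_lambda_mult_pure_right)
qed (simp_all add: tensor_mul_def)

lemma smash_bicomodule_hom_algebra: "bicomodule_hom_algebra muH deH alH M AL LA RH"
proof -
  have "hom_assoc M AL"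
    unfolding hom_assoc_def using smash_alpha_mult smash_mult_hom_assoc by simp
  moreover have "left_comodule deH alH AL LA"
    unfolding left_comodule_def using smash_lambda_alpha smash_lambda_coassoc by simp
  moreover have "right_comodule deH alH AL RH"
    unfolding right_comodule_def using smash_rho_alpha smash_rho_coassoc by simp
  ultimately show ?thesis
    unfolding bicomodule_hom_algebra_def left_comodule_hom_algebra_def
      right_comodule_hom_algebra_def bicomodule_def hom_alg_morphism_def
    using smash_lambda_alpha smash_lambda_mult smash_rho_alpha smash_rho_mult
      smash_lambda_rho_compat by simp
qed

end

theorem proposition3p9:
  fixes muH :: "('i \<times> 'i \<Rightarrow>\<^sub>0 'k::field) \<Rightarrow> ('i \<Rightarrow>\<^sub>0 'k)"
    and deH :: "('i \<Rightarrow>\<^sub>0 'k) \<Rightarrow> ('i \<times> 'i \<Rightarrow>\<^sub>0 'k)"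
    and alH :: "('i \<Rightarrow>\<^sub>0 'k) \<Rightarrow> ('i \<Rightarrow>\<^sub>0 'k)"
    and muA :: "('j \<times> 'j \<Rightarrow>\<^sub>0 'k) \<Rightarrow> ('j \<Rightarrow>\<^sub>0 'k)"
    and alA :: "('j \<Rightarrow>\<^sub>0 'k) \<Rightarrow> ('j \<Rightarrow>\<^sub>0 'k)"
    and act :: "('i \<times> 'j \<Rightarrow>\<^sub>0 'k) \<Rightarrow> ('j \<Rightarrow>\<^sub>0 'k)"
    and la :: "('j \<Rightarrow>\<^sub>0 'k) \<Rightarrow> ('i \<times> 'j \<Rightarrow>\<^sub>0 'k)"
  assumes "hom_bialgebra muH deH alH"
    and "module_hom_algebra muH deH alH muA alA act"
    and "bij alH" and "bij alA"
    and "left_comodule_hom_algebra muH deH alH muA alA la"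
    and "yd_module muH deH alH alA act la"
  shows "bicomodule_hom_algebra muH deH alH
           (smash_mul muH deH alH muA alA act) (tmap alA alH)
           (smash_lambda muH deH la) (smash_rho deH alA)"
proof -
  interpret hom_smash_data muH deH alH muA alA act la
    by (rule hom_smash_data.intro) (fact assms)+
  show ?thesis
    by (rule smash_bicomodule_hom_algebra)
qed

end
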